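(* Let $\mathcal C\subseteq 2^{[n]}$ be a code and suppose that a neuron $i\in[n]$ is a piercing of $\mathcal C$ (i.e. a $k$-piercing for some $k$). Then $\mathcal C$ is inductively pierced if and only if $\mathcal C\setminus i$ is inductively pierced.
   Context: A code is a set $\mathcal C\subseteq 2^{[n]}$, $[n]=\{1,\dots,n\}$, elements of $[n]$ being neurons. Standing conventions: $\emptyset\in\mathcal C$; every neuron lies in some codeword; no two distinct neurons lie in exactly the same codewords. $\mathcal C\setminus i$ is obtained by removing $i$ from every codeword. For $\sigma\subseteq\tau$, $[\sigma,\tau]=\{\gamma:\sigma\subseteq\gamma\subseteq\tau\}$, of rank $|\tau\setminus\sigma|$. A neuron $i$ is a $k$-piercing of $\mathcal C$ if there are $\sigma\subseteq\tau\subseteq[n]\setminus\{i\}$ with $[\sigma,\tau]$ of rank $k$, $[\sigma,\tau]\subseteq\mathcal C\setminus i$, and $\mathcal C=(\mathcal C\setminus i)\cup[\sigma\cup\{i\},\tau\cup\{i\}]$. A code is $k$-inductively pierced if $\mathcal C=\{\emptyset\}$, or some neuron $j$ is a $k'$-piercing for some $k'\le k$ and $\mathcal C\setminus j$ is $k$-inductively pierced; inductively pierced means $k$-inductively pierced for some $k$. *)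

theory Defs
  imports Main
begin

definition is_code :: "nat \<Rightarrow> nat set set \<Rightarrow> bool" where
  "is_code n C \<longleftrightarrow>
     C \<subseteq> Pow {1..n} \<and> {} \<in> C \<and>
     (\<forall>j\<in>{1..n}. \<exists>c\<in>C. j \<in> c) \<and>
     (\<forall>j\<in>{1..n}. \<forall>l\<in>{1..n}. j \<noteq> l \<longrightarrow> {c\<in>C. j \<in> c} \<noteq> {c\<in>C. l \<in> c})"

definition code_del :: "nat set set \<Rightarrow> nat \<Rightarrow> nat set set" where
  "code_del C i = (\<lambda>c. c - {i}) ` C"

definition code_interval :: "nat set \<Rightarrow> nat set \<Rightarrow> nat set set" where
  "code_interval \<sigma> \<tau> = {\<gamma>. \<sigma> \<subseteq> \<gamma> \<and> \<gamma> \<subseteq> \<tau>}"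

text \<open>Neuron i is a k-piercing of C. (The requirement tau within [n] is implied by
tau being a codeword of C \ i.)\<close>
definition is_k_piercing :: "nat set set \<Rightarrow> nat \<Rightarrow> nat \<Rightarrow> bool" where
  "is_k_piercing C i k \<longleftrightarrow>
     (\<exists>\<sigma> \<tau>. \<sigma> \<subseteq> \<tau> \<and> i \<notin> \<tau> \<and> card (\<tau> - \<sigma>) = k \<and>
        code_interval \<sigma> \<tau> \<subseteq> code_del C i \<and>
        C = code_del C i \<union> code_interval (insert i \<sigma>) (insert i \<tau>))"

inductive k_ind_pierced :: "nat \<Rightarrow> nat set set \<Rightarrow> bool" where
  base: "k_ind_pierced k {{}}"
| step: "\<lbrakk>is_k_piercing C j k'; k' \<le> k; k_ind_pierced k (code_del C j)\<rbrakk>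
          \<Longrightarrow> k_ind_pierced k C"

definition ind_pierced :: "nat set set \<Rightarrow> bool" where
  "ind_pierced C \<longleftrightarrow> (\<exists>k. k_ind_pierced k C)"

end

theory Submission
  imports Defs
begin

text \<open>Deleting a neuron i commutes with deleting any other neuron j, and it maps a j-piercing
  interval [sigma, tau] onto the interval [sigma - {i}, tau - {i}] of no larger rank. Hence a
  piercing sequence for C restricts to one for C \ i with the same rank bound. Conversely, a
  piercing sequence for C \ i is extended to one for C by first piercing with i itself.\<close>

lemma code_del_commute: "code_del (code_del C i) j = code_del (code_del C j) i"
  unfolding code_del_def image_image by (rule image_cong) auto

lemma code_del_Un: "code_del (A \<union> B) i = code_del A i \<union> code_del B i"
  unfolding code_del_def by (rule image_Un)

lemma code_del_mono: "A \<subseteq> B \<Longrightarrow> code_del A i \<subseteq> code_del B i"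
  unfolding code_del_def by (rule image_mono)

lemma code_del_empty_codeword: "code_del {{}} i = {{}}"
  unfolding code_del_def by simp

lemma code_del_code_interval:
  assumes "\<sigma> \<subseteq> \<tau>"
  shows "code_del (code_interval \<sigma> \<tau>) i = code_interval (\<sigma> - {i}) (\<tau> - {i})"
proof (rule set_eqI, rule iffI)
  fix \<gamma>
  assume "\<gamma> \<in> code_del (code_interval \<sigma> \<tau>) i"
  then show "\<gamma> \<in> code_interval (\<sigma> - {i}) (\<tau> - {i})"
    unfolding code_del_def code_interval_def by auto
next
  fix \<gamma>
  assume \<gamma>: "\<gamma> \<in> code_interval (\<sigma> - {i}) (\<tau> - {i})"
  define \<delta> where "\<delta> = (if i \<in> \<sigma> then insert i \<gamma> else \<gamma>)"
  have "\<delta> \<in> code_interval \<sigma> \<tau>" and "\<gamma> = \<delta> - {i}"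
    using \<gamma> assms unfolding \<delta>_def code_interval_def by auto
  then show "\<gamma> \<in> code_del (code_interval \<sigma> \<tau>) i"
    unfolding code_del_def by blast
qed

lemma is_k_piercing_code_del:
  assumes "is_k_piercing C j k" and "i \<noteq> j"
  shows "\<exists>k'\<le>k. is_k_piercing (code_del C i) j k'"
proof -
  from assms(1) obtain \<sigma> \<tau> where "\<sigma> \<subseteq> \<tau>" and "j \<notin> \<tau>" and rank: "card (\<tau> - \<sigma>) = k"
    and interval: "code_interval \<sigma> \<tau> \<subseteq> code_del C j"
    and C_eq: "C = code_del C j \<union> code_interval (insert j \<sigma>) (insert j \<tau>)"
    unfolding is_k_piercing_def by blast
  let ?\<sigma> = "\<sigma> - {i}" and ?\<tau> = "\<tau> - {i}"
  have interval': "code_interval ?\<sigma> ?\<tau> \<subseteq> code_del (code_del C i) j"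
    using code_del_mono[OF interval, of i] \<open>\<sigma> \<subseteq> \<tau>\<close>
    by (simp add: code_del_code_interval code_del_commute)
  have "code_del C i = code_del (code_del C j \<union> code_interval (insert j \<sigma>) (insert j \<tau>)) i"
    using C_eq by (rule arg_cong)
  also have "\<dots> = code_del (code_del C i) j \<union> code_interval (insert j \<sigma> - {i}) (insert j \<tau> - {i})"
    using code_del_code_interval[OF insert_mono[OF \<open>\<sigma> \<subseteq> \<tau>\<close>]]
    by (simp add: code_del_Un code_del_commute)
  finally have C_eq': "code_del C i = code_del (code_del C i) j \<union> code_interval (insert j ?\<sigma>) (insert j ?\<tau>)"
    using \<open>i \<noteq> j\<close> by (simp add: insert_Diff_if)
  have "?\<tau> - ?\<sigma> = (\<tau> - \<sigma>) - {i}"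
    by blast
  then have rank': "card (?\<tau> - ?\<sigma>) \<le> k"
    using card_Diff1_le[of "\<tau> - \<sigma>" i] rank by (simp only:)
  have "is_k_piercing (code_del C i) j (card (?\<tau> - ?\<sigma>))"
    unfolding is_k_piercing_def
  proof (intro exI conjI)
    show "?\<sigma> \<subseteq> ?\<tau>" and "j \<notin> ?\<tau>"
      using \<open>\<sigma> \<subseteq> \<tau>\<close> \<open>j \<notin> \<tau>\<close> by auto
  qed (rule refl interval' C_eq')+
  with rank' show ?thesis
    by blast
qed

lemma k_ind_pierced_code_del: "k_ind_pierced k C \<Longrightarrow> k_ind_pierced k (code_del C i)"
proof (induction arbitrary: i rule: k_ind_pierced.induct)
  case (base k)
  then show ?case by (simp add: code_del_empty_codeword k_ind_pierced.base)
next
  case (step C j k' k)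
  show ?case
  proof (cases "i = j")
    case True
    then show ?thesis using step.hyps(3) by simp
  next
    case False
    obtain k'' where "k'' \<le> k'" and "is_k_piercing (code_del C i) j k''"
      using is_k_piercing_code_del[OF step.hyps(1) False] by blast
    moreover have "k_ind_pierced k (code_del (code_del C i) j)"
      using step.IH[of i] by (simp add: code_del_commute)
    ultimately show ?thesis
      using step.hyps(2) by (meson k_ind_pierced.step le_trans)
  qed
qed

lemma k_ind_pierced_mono: "k_ind_pierced k C \<Longrightarrow> k \<le> m \<Longrightarrow> k_ind_pierced m C"
proof (induction rule: k_ind_pierced.induct)
  case (base k)
  show ?case by (rule k_ind_pierced.base)
next
  case (step C j k' k)
  then show ?case by (meson k_ind_pierced.step le_trans)
qed

theorem proposition1p8:
  fixes n i :: nat and C :: "nat set set"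
  assumes "is_code n C"
    and "i \<in> {1..n}"
    and "\<exists>k. is_k_piercing C i k"
  shows "ind_pierced C \<longleftrightarrow> ind_pierced (code_del C i)"
proof
  assume "ind_pierced C"
  then show "ind_pierced (code_del C i)"
    unfolding ind_pierced_def using k_ind_pierced_code_del by blast
next
  assume "ind_pierced (code_del C i)"
  then obtain k where k: "k_ind_pierced k (code_del C i)"
    unfolding ind_pierced_def by blast
  obtain m where m: "is_k_piercing C i m"
    using assms(3) by blast
  have "k_ind_pierced (max k m) C"
    using k_ind_pierced.step[OF m _ k_ind_pierced_mono[OF k]] by simp
  then show "ind_pierced C"
    unfolding ind_pierced_def by blast
qed

end
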